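(* For every PICOD hypergraph $\mathcal{H}$ with $\Delta(\mathcal{H})\ge 1$ and every prime power $q$, $\beta_q(\mathcal{H})\le\Delta(\mathcal{H})$.
   Context: PICOD problem: a server holds $m$ messages $b_1,\dots,b_m\in\mathbb{F}_q$; there are $n$ clients, client $i$ having side-information $\{b_j: j\in S_i\}$, $S_i\subseteq[m]$, and request-set $R_i=[m]\setminus S_i$ (assumed non-empty); client $i$ wants any one message $b_j$ with $j\in R_i$. A PICOD scheme of length $\ell$ over $\mathbb{F}_q$ is an encoding map $\phi:\mathbb{F}_q^m\to\mathbb{F}_q^\ell$ such that for every client $i$ there is an index $j_i\in R_i$ and a function $\psi_i$ with $\psi_i(\phi(b),(b_k)_{k\in S_i})=b_{j_i}$ for all $b\in\mathbb{F}_q^m$. The PICOD hypergraph $\mathcal{H}$ has vertex set $[m]$ and edge set $\{R_i:i\in[n]\}$. $\beta_q(\mathcal{H})$ is the minimum length of a PICOD scheme for $\mathcal{H}$ over $\mathbb{F}_q$. The degree of a vertex is the number of edges containing it, and $\Delta(\mathcal{H})$ is the maximum degree over all vertices. *)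

theory Defs
  imports Main
begin

text \<open>Messages b_1..b_m are modelled as vectors b :: nat => 'q indexed by 0..m-1
  (entries outside {0..<m} are fixed to 0). Clients are indexed by 0..n-1;
  client i has request set R i (a subset of {0..<m}) and side information
  S_i = {0..<m} - R i.\<close>

definition msgs :: "nat \<Rightarrow> (nat \<Rightarrow> 'q::zero) set" where
  "msgs m = {b. \<forall>j. j \<ge> m \<longrightarrow> b j = 0}"

definition side_info :: "nat \<Rightarrow> nat set \<Rightarrow> (nat \<Rightarrow> 'q::zero) \<Rightarrow> (nat \<Rightarrow> 'q)" where
  "side_info m Ri b = (\<lambda>k. if k \<in> {0..<m} - Ri then b k else 0)"

definition picod_scheme ::
  "nat \<Rightarrow> nat \<Rightarrow> (nat \<Rightarrow> nat set) \<Rightarrow> nat \<Rightarrow> ((nat \<Rightarrow> 'q::field) \<Rightarrow> 'q list) \<Rightarrow> bool" where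
  "picod_scheme m n R l \<phi> \<longleftrightarrow>
     (\<forall>b \<in> msgs m. length (\<phi> b) = l) \<and>
     (\<forall>i<n. \<exists>j \<in> R i. \<exists>\<psi> :: 'q list \<Rightarrow> (nat \<Rightarrow> 'q) \<Rightarrow> 'q.
        \<forall>b \<in> msgs m. \<psi> (\<phi> b) (side_info m (R i) b) = b j)"

definition beta :: "'q::field itself \<Rightarrow> nat \<Rightarrow> nat \<Rightarrow> (nat \<Rightarrow> nat set) \<Rightarrow> nat" where
  "beta _ m n R = (LEAST l. \<exists>\<phi> :: (nat \<Rightarrow> 'q) \<Rightarrow> 'q list. picod_scheme m n R l \<phi>)"

definition edges :: "nat \<Rightarrow> (nat \<Rightarrow> nat set) \<Rightarrow> nat set set" where
  "edges n R = R ` {..<n}"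

definition degree :: "nat \<Rightarrow> (nat \<Rightarrow> nat set) \<Rightarrow> nat \<Rightarrow> nat" where
  "degree n R v = card {e \<in> edges n R. v \<in> e}"

definition max_degree :: "nat \<Rightarrow> nat \<Rightarrow> (nat \<Rightarrow> nat set) \<Rightarrow> nat" where
  "max_degree m n R = Max (insert 0 (degree n R ` {..<m}))"

definition picod_hypergraph :: "nat \<Rightarrow> nat \<Rightarrow> (nat \<Rightarrow> nat set) \<Rightarrow> bool" where
  "picod_hypergraph m n R \<longleftrightarrow> (\<forall>i<n. R i \<subseteq> {0..<m} \<and> R i \<noteq> {})"

end

theory Submission
  imports Defs
begin

text \<open>A set T meeting every request set in at most one element, and maximal with this
  property, meets some request set containing v in exactly one element, for every
  covered vertex v. Removing the request sets met exactly once lowers every positive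
  degree, so by induction on \<Delta> there are sets T_1, ..., T_\<Delta> such that each request set
  meets some T_k in a single element j. Transmitting the sums of the messages over each
  T_k then lets a client decode b_j, since all other summands lie in its side information.\<close>

lemma maximal_at_most_once_set:
  fixes E :: "'a set set"
  assumes "finite V" and "\<forall>e\<in>E. e \<subseteq> V"
  obtains T where "T \<subseteq> V" and "\<forall>e\<in>E. card (e \<inter> T) \<le> 1"
    and "\<forall>v\<in>V. (\<exists>e\<in>E. v \<in> e) \<longrightarrow> (\<exists>e\<in>E. v \<in> e \<and> card (e \<inter> T) = 1)"
proof -
  define A where "A = {T. T \<subseteq> V \<and> (\<forall>e\<in>E. card (e \<inter> T) \<le> 1)}"
  have "finite A" using \<open>finite V\<close> by (intro finite_subset[of A "Pow V"]) (auto simp: A_def)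
  moreover have "{} \<in> A" unfolding A_def by simp
  ultimately obtain T where "T \<in> A" and T_max: "\<forall>B\<in>A. T \<subseteq> B \<longrightarrow> T = B"
    using finite_has_maximal by blast
  then have T_sub: "T \<subseteq> V" and T_le: "\<forall>e\<in>E. card (e \<inter> T) \<le> 1" by (auto simp: A_def)
  have "finite T" using T_sub \<open>finite V\<close> finite_subset by blast
  have "\<exists>e'\<in>E. v \<in> e' \<and> card (e' \<inter> T) = 1" if "v \<in> V" "e \<in> E" "v \<in> e" for v e
  proof (cases "v \<in> T")
    case True
    then have "card (e \<inter> T) \<noteq> 0" using \<open>v \<in> e\<close> \<open>finite T\<close> by auto
    then show ?thesis using T_le that by (metis le_antisym less_one not_le)
  next
    case False
    have "insert v T \<notin> A" using T_max False by blast
    then obtain e' where "e' \<in> E" and big: "card (e' \<inter> insert v T) > 1"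
      unfolding A_def using \<open>v \<in> V\<close> T_sub by (auto simp: not_le)
    moreover have "v \<in> e'"
      using big T_le \<open>e' \<in> E\<close> by (metis Int_insert_right not_le)
    ultimately have "card (e' \<inter> T) \<ge> 1"
      using False \<open>finite T\<close> by simp
    then show ?thesis using T_le \<open>e' \<in> E\<close> \<open>v \<in> e'\<close> by (metis le_antisym)
  qed
  with T_sub T_le that show thesis by blast
qed

lemma exists_exactly_once_hitting_sets:
  fixes E :: "'a set set"
  assumes "finite V" and "\<forall>e\<in>E. e \<subseteq> V \<and> e \<noteq> {}"
    and "\<forall>v\<in>V. card {e\<in>E. v \<in> e} \<le> d"
  shows "\<exists>Ts. length Ts = d \<and> set Ts \<subseteq> Pow V \<and> (\<forall>e\<in>E. \<exists>T\<in>set Ts. card (e \<inter> T) = 1)"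
  using assms(2,3)
proof (induction d arbitrary: E)
  case 0
  have "finite E" using \<open>finite V\<close> 0(1) by (intro finite_subset[of E "Pow V"]) auto
  have "E = {}"
  proof (rule ccontr)
    assume "E \<noteq> {}"
    then obtain e v where "e \<in> E" "v \<in> e" using 0(1) by blast
    then have "v \<in> V" and "{e\<in>E. v \<in> e} \<noteq> {}" using 0(1) by blast+
    moreover have "finite {e\<in>E. v \<in> e}" using \<open>finite E\<close> by simp
    moreover have "card {e\<in>E. v \<in> e} \<le> 0" using 0(2) \<open>v \<in> V\<close> by blast
    ultimately show False by (simp only: le_zero_eq card_0_eq)
  qed
  then show ?case by simp
next
  case (Suc d)
  have "finite E" using \<open>finite V\<close> Suc.prems(1) by (intro finite_subset[of E "Pow V"]) auto
  have "\<forall>e\<in>E. e \<subseteq> V" using Suc.prems(1) by blast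
  then obtain T where T_sub: "T \<subseteq> V" and T_le: "\<forall>e\<in>E. card (e \<inter> T) \<le> 1"
    and T_hits: "\<forall>v\<in>V. (\<exists>e\<in>E. v \<in> e) \<longrightarrow> (\<exists>e\<in>E. v \<in> e \<and> card (e \<inter> T) = 1)"
    by (rule maximal_at_most_once_set[OF \<open>finite V\<close>])
  define E' where "E' = {e\<in>E. card (e \<inter> T) \<noteq> 1}"
  have E'_degree: "\<forall>v\<in>V. card {e\<in>E'. v \<in> e} \<le> d"
  proof
    fix v assume "v \<in> V"
    show "card {e\<in>E'. v \<in> e} \<le> d"
    proof (cases "\<exists>e\<in>E. v \<in> e")
      case False
      then have "{e\<in>E'. v \<in> e} = {}" by (auto simp: E'_def)
      then show ?thesis by (simp only: card.empty le0)
    next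
      case True
      then obtain e where "e \<in> E" "v \<in> e" "card (e \<inter> T) = 1" using T_hits \<open>v \<in> V\<close> by blast
      then have "{e\<in>E'. v \<in> e} \<subset> {e\<in>E. v \<in> e}" by (auto simp: E'_def)
      then have "card {e\<in>E'. v \<in> e} < card {e\<in>E. v \<in> e}"
        using \<open>finite E\<close> by (simp add: psubset_card_mono)
      moreover have "card {e\<in>E. v \<in> e} \<le> Suc d" using Suc.prems(2) \<open>v \<in> V\<close> by blast
      ultimately show ?thesis by linarith
    qed
  qed
  have E'_edges: "\<forall>e\<in>E'. e \<subseteq> V \<and> e \<noteq> {}" using Suc.prems(1) by (simp add: E'_def)
  obtain Ts where "length Ts = d" "set Ts \<subseteq> Pow V"
    and Ts_hits: "\<forall>e\<in>E'. \<exists>T\<in>set Ts. card (e \<inter> T) = 1"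
    using Suc.IH[OF E'_edges E'_degree] by blast
  moreover have "\<forall>e\<in>E. \<exists>T'\<in>set (T # Ts). card (e \<inter> T') = 1"
    using Ts_hits by (auto simp: E'_def)
  ultimately show ?case using T_sub by (intro exI[of _ "T # Ts"]) auto
qed

lemma picod_scheme_subset_sums:
  fixes Ts :: "nat set list"
  assumes Ts_sub: "\<forall>T\<in>set Ts. T \<subseteq> {0..<m}"
    and Ts_hits: "\<forall>i<n. \<exists>T\<in>set Ts. card (R i \<inter> T) = 1"
  shows "picod_scheme m n R (length Ts) (\<lambda>b :: nat \<Rightarrow> 'q::field. map (sum b) Ts)"
  unfolding picod_scheme_def
proof (intro conjI ballI allI impI)
  fix i assume "i < n"
  then obtain T where "T \<in> set Ts" "card (R i \<inter> T) = 1" using Ts_hits by blast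
  then obtain j where j: "R i \<inter> T = {j}" using card_1_singletonE by blast
  obtain k where k: "k < length Ts" "Ts ! k = T" using \<open>T \<in> set Ts\<close> by (meson in_set_conv_nth)
  have "T \<subseteq> {0..<m}" using Ts_sub \<open>T \<in> set Ts\<close> by blast
  then have "finite T" by (rule finite_subset) simp
  define \<psi> where "\<psi> = (\<lambda>(y :: 'q list) s. y ! k - sum s (T - {j}))"
  have "\<psi> (map (sum b) Ts) (side_info m (R i) b) = b j" for b :: "nat \<Rightarrow> 'q"
  proof -
    have "sum (side_info m (R i) b) (T - {j}) = sum b (T - {j})"
      using j \<open>T \<subseteq> {0..<m}\<close> by (intro sum.cong) (auto simp: side_info_def)
    moreover have "sum b T = b j + sum b (T - {j})"
      using j \<open>finite T\<close> by (intro sum.remove) auto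
    ultimately show ?thesis using k by (simp add: \<psi>_def)
  qed
  moreover have "j \<in> R i" using j by blast
  ultimately show "\<exists>j\<in>R i. \<exists>\<psi> :: 'q list \<Rightarrow> (nat \<Rightarrow> 'q) \<Rightarrow> 'q.
      \<forall>b\<in>msgs m. \<psi> (map (sum b) Ts) (side_info m (R i) b) = b j"
    by blast
qed simp

lemma degree_le_max_degree:
  assumes "v < m"
  shows "degree n R v \<le> max_degree m n R"
  unfolding max_degree_def using assms by (intro Max_ge) auto

theorem theorem1:
  fixes m n :: nat and R :: "nat \<Rightarrow> nat set"
  assumes "picod_hypergraph m n R"
    and "max_degree m n R \<ge> 1"
  shows "beta TYPE('q::{finite,field}) m n R \<le> max_degree m n R"
proof -
  have edges_sub: "\<forall>e\<in>edges n R. e \<subseteq> {0..<m} \<and> e \<noteq> {}"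
    using assms(1) unfolding edges_def picod_hypergraph_def by blast
  have degrees_le: "\<forall>v\<in>{0..<m}. card {e\<in>edges n R. v \<in> e} \<le> max_degree m n R"
    using degree_le_max_degree unfolding degree_def by simp
  obtain Ts where "length Ts = max_degree m n R" and "set Ts \<subseteq> Pow {0..<m}"
    and Ts_hits: "\<forall>e\<in>edges n R. \<exists>T\<in>set Ts. card (e \<inter> T) = 1"
    using exists_exactly_once_hitting_sets[OF finite_atLeastLessThan edges_sub degrees_le] by blast
  moreover have "\<forall>i<n. \<exists>T\<in>set Ts. card (R i \<inter> T) = 1"
    using Ts_hits unfolding edges_def by simp
  ultimately have "picod_scheme m n R (max_degree m n R) (\<lambda>b :: nat \<Rightarrow> 'q. map (sum b) Ts)"
    using picod_scheme_subset_sums[of Ts m n R] by auto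
  then show ?thesis unfolding beta_def by (intro Least_le) blast
qed

end
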